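(* Let $r:\mathfrak h^*\to\wedge^2\mathfrak g$ be a smooth map and let $\Lambda=\sum_{i=1}^l h_i\wedge\frac{\partial}{\partial\lambda^i}+r(\lambda)\in\Gamma(\wedge^2A)$, where $A=T\mathfrak h^*\times\mathfrak g$ is the product Lie algebroid described in the context. Then $r$ is a triangular dynamical $r$-matrix if and only if $[\Lambda,\Lambda]=0$ (Schouten bracket of the Lie algebroid $A$), i.e. if and only if $(A,\Lambda)$ defines a triangular Lie bialgebroid $(A,A^* )$, the Lie algebroid structure on $A^*$ being the one whose differential on $\Gamma(\wedge^\bullet A)$ is $d_*=[\Lambda,\cdot\,]$.
   Context: Let $\mathfrak g$ be a finite-dimensional real Lie algebra and $\mathfrak h\subset\mathfrak g$ an abelian Lie subalgebra of dimension $l$ with basis $h_1,\dots,h_l$; let $(\lambda^1,\dots,\lambda^l)$ be the induced linear coordinates on $\mathfrak h^*$. A triangular dynamical $r$-matrix is a smooth map $r:\mathfrak h^*\to\wedge^2\mathfrak g$ such that (a) (zero weight) $[h,r(\lambda)]=0$ for all $h\in\mathfrak h$, $\lambda\in\mathfrak h^*$, where $\mathfrak g$ acts on $\wedge^2\mathfrak g$ by the adjoint action, and (b) (classical dynamical Yang–Baxter equation) $\sum_i h_i\wedge\frac{\partial r}{\partial\lambda^i}+\frac12[r,r]=0$, where $[\cdot,\cdot]:\wedge^k\mathfrak g\otimes\wedge^m\mathfrak g\to\wedge^{k+m-1}\mathfrak g$ is the Schouten-type bracket extending the Lie bracket of $\mathfrak g$. The product Lie algebroid $A=T\mathfrak h^*\times\mathfrak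 g$ over $\mathfrak h^*$ has sections $(X,f)$ with $X$ a vector field on $\mathfrak h^*$ and $f:\mathfrak h^*\to\mathfrak g$ smooth, bracket $[(X,f),(Y,g)]=([X,Y],X(g)-Y(f)+[f,g])$ and anchor the projection $(X,f)\mapsto X$; the bracket extends to a Schouten bracket on $\Gamma(\wedge^\bullet A)$. *)

theory Defs
  imports "HOL-Analysis.Analysis"
begin

text \<open>
  The Lie algebra g is modelled in a basis e_a indexed by a finite type 'n:
  its bracket is given by structure constants c a b k, i.e. [e_a,e_b] = sum_k c a b k e_k.

  Multivectors are represented by their (totally antisymmetric) components:
  a bivector P stands for (1/2) sum_{a,b} P a b e_a /\ e_b, a trivector T stands for
  (1/6) sum_{a,b,c} T a b c e_a /\ e_b /\ e_c.

  The dual h* of the abelian subalgebra h (with basis h_1..h_l, indexed by 'l) is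
  identified with real^'l via the linear coordinates lambda^i, i.e. lambda $ i = lambda^i.
\<close>

definition lie_structure :: "('n::finite \<Rightarrow> 'n \<Rightarrow> 'n \<Rightarrow> real) \<Rightarrow> bool" where
  "lie_structure c \<longleftrightarrow>
     (\<forall>a b k. c a b k = - c b a k) \<and>
     (\<forall>a b d m. (\<Sum>k\<in>UNIV. c a b k * c k d m + c b d k * c k a m + c d a k * c k b m) = 0)"

definition lie_br :: "('n::finite \<Rightarrow> 'n \<Rightarrow> 'n \<Rightarrow> real) \<Rightarrow> ('n \<Rightarrow> real) \<Rightarrow> ('n \<Rightarrow> real) \<Rightarrow> ('n \<Rightarrow> real)" where
  "lie_br c x y = (\<lambda>k. \<Sum>a\<in>UNIV. \<Sum>b\<in>UNIV. x a * y b * c a b k)"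

definition lin_indep_family :: "('l::finite \<Rightarrow> 'n::finite \<Rightarrow> real) \<Rightarrow> bool" where
  "lin_indep_family h \<longleftrightarrow> (\<forall>u. (\<forall>k. (\<Sum>i\<in>UNIV. u i * h i k) = 0) \<longrightarrow> (\<forall>i. u i = 0))"

definition abelian_family :: "('n::finite \<Rightarrow> 'n \<Rightarrow> 'n \<Rightarrow> real) \<Rightarrow> ('l::finite \<Rightarrow> 'n \<Rightarrow> real) \<Rightarrow> bool" where
  "abelian_family c h \<longleftrightarrow> (\<forall>i j. lie_br c (h i) (h j) = (\<lambda>_. 0))"

definition partial :: "'l::finite \<Rightarrow> (real^'l \<Rightarrow> real) \<Rightarrow> real^'l \<Rightarrow> real" where
  "partial i f x = deriv (\<lambda>t. f (x + t *\<^sub>R axis i 1)) 0"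

fun iter_partial :: "'l::finite list \<Rightarrow> (real^'l \<Rightarrow> real) \<Rightarrow> real^'l \<Rightarrow> real" where
  "iter_partial [] f = f"
| "iter_partial (i # is) f = partial i (iter_partial is f)"

definition smooth_fun :: "(real^'l::finite \<Rightarrow> real) \<Rightarrow> bool" where
  "smooth_fun f \<longleftrightarrow>
     (\<forall>is. continuous_on UNIV (iter_partial is f) \<and>
           (\<forall>i x. (\<lambda>t. iter_partial is f (x + t *\<^sub>R axis i 1)) differentiable (at 0)))"

definition smooth_wedge2_map :: "(real^'l::finite \<Rightarrow> 'n \<Rightarrow> 'n \<Rightarrow> real) \<Rightarrow> bool" where
  "smooth_wedge2_map r \<longleftrightarrow>
     (\<forall>x a b. r x a b = - r x b a) \<and> (\<forall>a b. smooth_fun (\<lambda>x. r x a b))"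

text \<open>Components of the trivector sum_{a,b,c} U a b c e_a /\ e_b /\ e_c.\<close>
definition alt3 :: "('i \<Rightarrow> 'i \<Rightarrow> 'i \<Rightarrow> real) \<Rightarrow> 'i \<Rightarrow> 'i \<Rightarrow> 'i \<Rightarrow> real" where
  "alt3 U a b c = U a b c - U a c b - U b a c + U b c a + U c a b - U c b a"

definition wedge12 :: "('i \<Rightarrow> real) \<Rightarrow> ('i \<Rightarrow> 'i \<Rightarrow> real) \<Rightarrow> 'i \<Rightarrow> 'i \<Rightarrow> 'i \<Rightarrow> real" where
  "wedge12 x Q = alt3 (\<lambda>a b c. x a * Q b c / 2)"

text \<open>
  Schouten bracket [P,Q] of two bivector sections of a Lie algebroid E over a base 'b that
  admits a global frame (E_I) indexed by 'i with constant structure constants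
  [E_I,E_K] = sum_M C I K M E_M and anchor acting on functions by anc I
  (i.e. anc I f = rho(E_I)(f)). This is the unique extension of the Lie algebroid bracket
  to a graded bracket on Gamma(wedge E), computed on bivectors:
  [P,Q] = sum (1/2)(P^{IJ} rho_I(Q^{KL}) + Q^{IJ} rho_I(P^{KL})) E_K /\ E_J /\ E_L
          + sum P^{IJ} Q^{KL} C_{IK}^M E_M /\ E_J /\ E_L.
\<close>
definition schouten2 ::
  "('i::finite \<Rightarrow> ('b \<Rightarrow> real) \<Rightarrow> 'b \<Rightarrow> real) \<Rightarrow> ('i \<Rightarrow> 'i \<Rightarrow> 'i \<Rightarrow> real)
   \<Rightarrow> ('b \<Rightarrow> 'i \<Rightarrow> 'i \<Rightarrow> real) \<Rightarrow> ('b \<Rightarrow> 'i \<Rightarrow> 'i \<Rightarrow> real) \<Rightarrow> 'b \<Rightarrow> 'i \<Rightarrow> 'i \<Rightarrow> 'i \<Rightarrow> real" where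
  "schouten2 anc C P Q x = alt3 (\<lambda>a b c.
      (\<Sum>I\<in>UNIV. (P x I b * anc I (\<lambda>y. Q y a c) x + Q x I b * anc I (\<lambda>y. P y a c) x) / 2)
    + (\<Sum>I\<in>UNIV. \<Sum>K\<in>UNIV. P x I b * Q x K c * C I K a))"

text \<open>The algebraic Schouten bracket on wedge g (g = Lie algebroid over a point).\<close>
definition lie_schouten2 ::
  "('n::finite \<Rightarrow> 'n \<Rightarrow> 'n \<Rightarrow> real) \<Rightarrow> ('n \<Rightarrow> 'n \<Rightarrow> real) \<Rightarrow> ('n \<Rightarrow> 'n \<Rightarrow> real) \<Rightarrow> 'n \<Rightarrow> 'n \<Rightarrow> 'n \<Rightarrow> real" where
  "lie_schouten2 c P Q = schouten2 (\<lambda>_ _ _. 0) c (\<lambda>_::unit. P) (\<lambda>_. Q) ()"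

text \<open>Adjoint action of x in g on a bivector: ad_x(u/\v) = [x,u]/\v + u/\[x,v].\<close>
definition ad_wedge2 :: "('n::finite \<Rightarrow> 'n \<Rightarrow> 'n \<Rightarrow> real) \<Rightarrow> ('n \<Rightarrow> real) \<Rightarrow> ('n \<Rightarrow> 'n \<Rightarrow> real) \<Rightarrow> 'n \<Rightarrow> 'n \<Rightarrow> real" where
  "ad_wedge2 c x Q a b = (\<Sum>d\<in>UNIV. lie_br c x (\<lambda>e. if e = d then 1 else 0) a * Q d b)
                       + (\<Sum>d\<in>UNIV. lie_br c x (\<lambda>e. if e = d then 1 else 0) b * Q a d)"

definition triangular_dynamical_r_matrix ::
  "('n::finite \<Rightarrow> 'n \<Rightarrow> 'n \<Rightarrow> real) \<Rightarrow> ('l::finite \<Rightarrow> 'n \<Rightarrow> real) \<Rightarrow> (real^'l \<Rightarrow> 'n \<Rightarrow> 'n \<Rightarrow> real) \<Rightarrow> bool" where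
  "triangular_dynamical_r_matrix c h r \<longleftrightarrow>
     smooth_wedge2_map r \<and>
     (\<forall>u x. ad_wedge2 c (\<lambda>k. \<Sum>i\<in>UNIV. u i * h i k) (r x) = (\<lambda>_ _. 0)) \<and>
     (\<forall>x. (\<lambda>a b d. (\<Sum>i\<in>UNIV. wedge12 (h i) (\<lambda>a' b'. partial i (\<lambda>y. r y a' b') x) a b d)
                   + lie_schouten2 c (r x) (r x) a b d / 2) = (\<lambda>_ _ _. 0))"

text \<open>Global frame of A indexed by 'l + 'n: E_(Inl i) = (d/d lambda^i, 0), E_(Inr a) = (0, e_a).\<close>

definition anchorA :: "'l::finite + 'n \<Rightarrow> (real^'l \<Rightarrow> real) \<Rightarrow> real^'l \<Rightarrow> real" where
  "anchorA I f x = (case I of Inl i \<Rightarrow> partial i f x | Inr a \<Rightarrow> 0)"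

definition structA :: "('n \<Rightarrow> 'n \<Rightarrow> 'n \<Rightarrow> real) \<Rightarrow> 'l + 'n \<Rightarrow> 'l + 'n \<Rightarrow> 'l + 'n \<Rightarrow> real" where
  "structA c I K M = (case (I, K, M) of (Inr a, Inr b, Inr k) \<Rightarrow> c a b k | _ \<Rightarrow> 0)"

text \<open>Lambda = sum_i h_i /\ d/d lambda^i + r(lambda), as components in the frame of A.\<close>
definition LambdaA :: "('l \<Rightarrow> 'n \<Rightarrow> real) \<Rightarrow> (real^'l \<Rightarrow> 'n \<Rightarrow> 'n \<Rightarrow> real)
                       \<Rightarrow> real^'l \<Rightarrow> 'l + 'n \<Rightarrow> 'l + 'n \<Rightarrow> real" where
  "LambdaA h r x I J = (case (I, J) of
       (Inr a, Inr b) \<Rightarrow> r x a b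
     | (Inr a, Inl i) \<Rightarrow> h i a
     | (Inl i, Inr a) \<Rightarrow> - h i a
     | (Inl i, Inl j) \<Rightarrow> 0)"

definition schoutenA :: "('n::finite \<Rightarrow> 'n \<Rightarrow> 'n \<Rightarrow> real)
   \<Rightarrow> (real^'l::finite \<Rightarrow> 'l + 'n \<Rightarrow> 'l + 'n \<Rightarrow> real) \<Rightarrow> (real^'l \<Rightarrow> 'l + 'n \<Rightarrow> 'l + 'n \<Rightarrow> real)
   \<Rightarrow> real^'l \<Rightarrow> 'l + 'n \<Rightarrow> 'l + 'n \<Rightarrow> 'l + 'n \<Rightarrow> real" where
  "schoutenA c P Q = schouten2 anchorA (structA c) P Q"

end

theory Submission
  imports Defs
begin

text \<open>
  In the frame of A all components of \<Lambda> are constant except r, the anchor only sees the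
  h*-directions and the structure constants only the g-directions. So [\<Lambda>,\<Lambda>] is the
  antisymmetrisation of an explicit tensor, and it suffices to compute its components by type:
  those with two h*-indices vanish because h is abelian, the (g,g,h*_i) components are
  -2 ad_{h_i} r, and the (g,g,g) components are twice the left-hand side of the classical
  dynamical Yang-Baxter equation. Zero weight for all of h follows from zero weight for the
  basis h_i by linearity.
\<close>

lemma sum_UNIV_sum_type:
  fixes f :: "'a::finite + 'b::finite \<Rightarrow> 'c::comm_monoid_add"
  shows "(\<Sum>I\<in>UNIV. f I) = (\<Sum>i\<in>UNIV. f (Inl i)) + (\<Sum>a\<in>UNIV. f (Inr a))"
  using sum.Plus[of "UNIV::'a set" "UNIV::'b set" f] by (simp add: comp_def)

lemma alt3_swap12: "alt3 U b a d = - alt3 U a b d"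
  by (simp add: alt3_def)

lemma alt3_swap23: "alt3 U a d b = - alt3 U a b d"
  by (simp add: alt3_def)

lemma trivector_eq_0_iff_sum_type:
  fixes T :: "'a + 'b \<Rightarrow> 'a + 'b \<Rightarrow> 'a + 'b \<Rightarrow> real"
  assumes swap12: "\<And>A B D. T B A D = - T A B D"
    and swap23: "\<And>A B D. T A D B = - T A B D"
    and Inl_Inl: "\<And>i j D. T (Inl i) (Inl j) D = 0"
  shows "T = (\<lambda>_ _ _. 0) \<longleftrightarrow>
    (\<forall>a b d. T (Inr a) (Inr b) (Inr d) = 0) \<and> (\<forall>a b i. T (Inr a) (Inr b) (Inl i) = 0)"
proof (intro iffI ext)
  fix A B D
  assume "(\<forall>a b d. T (Inr a) (Inr b) (Inr d) = 0) \<and> (\<forall>a b i. T (Inr a) (Inr b) (Inl i) = 0)"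
  then show "T A B D = 0"
    using Inl_Inl swap12 swap23
    by (cases A; cases B; cases D) metis+
qed simp_all

lemma schouten2_self:
  "schouten2 anc C P P x = alt3 (\<lambda>a b d.
      (\<Sum>I\<in>UNIV. P x I b * anc I (\<lambda>y. P y a d) x)
    + (\<Sum>I\<in>UNIV. \<Sum>K\<in>UNIV. P x I b * P x K d * C I K a))"
  unfolding schouten2_def by simp

lemma lie_schouten2_self:
  "lie_schouten2 c Q Q = alt3 (\<lambda>a b d. \<Sum>p\<in>UNIV. \<Sum>q\<in>UNIV. Q p b * Q q d * c p q a)"
  unfolding lie_schouten2_def schouten2_self by simp

lemma sum_wedge12:
  "(\<Sum>i\<in>I. wedge12 (x i) (Q i) a b d) = alt3 (\<lambda>a b d. \<Sum>i\<in>I. x i a * Q i b d) a b d / 2"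
  unfolding wedge12_def alt3_def
  by (simp add: sum.distrib sum_subtractf flip: sum_divide_distrib)

lemma lie_br_basis: "lie_br c x (\<lambda>e. if e = d then 1 else 0) k = (\<Sum>p\<in>UNIV. x p * c p d k)"
proof -
  have "x p * (if q = d then 1 else 0) * c p q k = (if q = d then x p * c p d k else 0)" for p q
    by simp
  then show ?thesis
    unfolding lie_br_def by simp
qed

lemma ad_wedge2_eq_sum:
  "ad_wedge2 c x Q a b =
     (\<Sum>p\<in>UNIV. \<Sum>q\<in>UNIV. x p * Q q b * c p q a) + (\<Sum>p\<in>UNIV. \<Sum>q\<in>UNIV. x p * Q a q * c p q b)"
  unfolding ad_wedge2_def lie_br_basis sum_distrib_right
  by (subst (1 2) sum.swap) (simp add: mult_ac)

lemma ad_wedge2_lincomb: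
  fixes h :: "'l::finite \<Rightarrow> 'n::finite \<Rightarrow> real"
  shows "ad_wedge2 c (\<lambda>k. \<Sum>i\<in>UNIV. u i * h i k) Q a b = (\<Sum>i\<in>UNIV. u i * ad_wedge2 c (h i) Q a b)"
  unfolding ad_wedge2_eq_sum
  by (simp add: sum_distrib_left sum_distrib_right distrib_left sum.distrib mult_ac
      sum.swap[where A = UNIV and B = "UNIV::'l set"])

lemma ad_wedge2_lincomb_eq_0_iff:
  fixes h :: "'l::finite \<Rightarrow> 'n::finite \<Rightarrow> real"
  shows "(\<forall>u. ad_wedge2 c (\<lambda>k. \<Sum>i\<in>UNIV. u i * h i k) Q = (\<lambda>_ _. 0)) \<longleftrightarrow>
         (\<forall>i. ad_wedge2 c (h i) Q = (\<lambda>_ _. 0))"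
proof
  assume lincomb: "\<forall>u. ad_wedge2 c (\<lambda>k. \<Sum>i\<in>UNIV. u i * h i k) Q = (\<lambda>_ _. 0)"
  show "\<forall>i. ad_wedge2 c (h i) Q = (\<lambda>_ _. 0)"
  proof
    fix i
    have "(\<lambda>k. \<Sum>j\<in>UNIV. (if j = i then 1 else 0) * h j k) = h i"
      by (simp add: fun_eq_iff mult_if_delta)
    then show "ad_wedge2 c (h i) Q = (\<lambda>_ _. 0)"
      using lincomb[rule_format, of "\<lambda>j. if j = i then 1 else 0"] by simp
  qed
qed (simp add: fun_eq_iff ad_wedge2_lincomb)

lemma sum_sum_swap_antisym:
  fixes c :: "'a \<Rightarrow> 'a \<Rightarrow> 'k \<Rightarrow> real"
  assumes "\<And>p q k. c p q k = - c q p k"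
  shows "(\<Sum>p\<in>UNIV. \<Sum>q\<in>UNIV. f p * g q * c p q k) = - (\<Sum>p\<in>UNIV. \<Sum>q\<in>UNIV. g p * f q * c p q k)"
proof -
  have "f p * g q * c p q k = - (g q * f p * c q p k)" for p q
    using assms[of p q k] by (simp add: algebra_simps)
  then show ?thesis
    by (subst sum.swap) (simp add: sum_negf)
qed

lemma partial_const [simp]: "partial i (\<lambda>y. k) x = 0"
  by (simp add: partial_def)

lemma anchorA_simps [simp]:
  "anchorA (Inl i) f x = partial i f x"
  "anchorA (Inr a) f x = 0"
  by (simp_all add: anchorA_def)

lemma structA_simps [simp]:
  "structA c (Inr a) (Inr b) (Inr k) = c a b k"
  "structA c (Inl i) K M = 0"
  "structA c I (Inl j) M = 0"
  "structA c I K (Inl m) = 0"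
  by (simp_all add: structA_def split: sum.splits)

lemma LambdaA_simps [simp]:
  "LambdaA h r x (Inr a) (Inr b) = r x a b"
  "LambdaA h r x (Inr a) (Inl i) = h i a"
  "LambdaA h r x (Inl i) (Inr a) = - h i a"
  "LambdaA h r x (Inl i) (Inl j) = 0"
  by (simp_all add: LambdaA_def)

lemma schoutenA_swap12: "schoutenA c P Q x B A D = - schoutenA c P Q x A B D"
  unfolding schoutenA_def schouten2_def by (rule alt3_swap12)

lemma schoutenA_swap23: "schoutenA c P Q x A D B = - schoutenA c P Q x A B D"
  unfolding schoutenA_def schouten2_def by (rule alt3_swap23)

lemma schoutenA_self:
  "schoutenA c P P x = alt3 (\<lambda>A B D.
       (\<Sum>i\<in>UNIV. P x (Inl i) B * partial i (\<lambda>y. P y A D) x)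
     + (case A of Inl _ \<Rightarrow> 0
        | Inr a \<Rightarrow> \<Sum>p\<in>UNIV. \<Sum>q\<in>UNIV. P x (Inr p) B * P x (Inr q) D * c p q a))"
  unfolding schoutenA_def schouten2_self
  by (rule arg_cong[where f = alt3], intro ext)
     (simp add: sum_UNIV_sum_type split: sum.split)

lemma schoutenA_LambdaA_Inl_Inl:
  assumes "abelian_family c h"
  shows "schoutenA c (LambdaA h r) (LambdaA h r) x (Inl i) (Inl j) D = 0"
proof -
  have "lie_br c (h i) (h j) a = 0" for i j a
    using assms by (simp add: abelian_family_def)
  then show ?thesis
    unfolding schoutenA_self alt3_def
    by (cases D) (simp_all add: sum_UNIV_sum_type lie_br_def)
qed

lemma schoutenA_LambdaA_Inr_Inr_Inl:
  assumes c_antisym: "\<And>p q k. c p q k = - c q p k"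
    and r_antisym: "\<And>a b. r x a b = - r x b a"
  shows "schoutenA c (LambdaA h r) (LambdaA h r) x (Inr a) (Inr b) (Inl i) =
     -2 * ad_wedge2 c (h i) (r x) a b"
proof -
  have "schoutenA c (LambdaA h r) (LambdaA h r) x (Inr a) (Inr b) (Inl i) =
      (\<Sum>p\<in>UNIV. \<Sum>q\<in>UNIV. r x p b * h i q * c p q a) - (\<Sum>p\<in>UNIV. \<Sum>q\<in>UNIV. h i p * r x q b * c p q a)
    - (\<Sum>p\<in>UNIV. \<Sum>q\<in>UNIV. r x p a * h i q * c p q b) + (\<Sum>p\<in>UNIV. \<Sum>q\<in>UNIV. h i p * r x q a * c p q b)"
    by (simp add: schoutenA_self alt3_def sum_UNIV_sum_type)
  also have "\<dots> = -2 * ((\<Sum>p\<in>UNIV. \<Sum>q\<in>UNIV. h i p * r x q b * c p q a)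
                        - (\<Sum>p\<in>UNIV. \<Sum>q\<in>UNIV. h i p * r x q a * c p q b))"
    using sum_sum_swap_antisym[where c = c and f = "\<lambda>p. r x p b" and g = "h i" and k = a, OF c_antisym]
      sum_sum_swap_antisym[where c = c and f = "\<lambda>p. r x p a" and g = "h i" and k = b, OF c_antisym]
    by simp
  also have "\<dots> = -2 * ad_wedge2 c (h i) (r x) a b"
    using r_antisym[of a] by (simp add: ad_wedge2_eq_sum sum_negf)
  finally show ?thesis .
qed

lemma schoutenA_LambdaA_Inr_Inr_Inr:
  "schoutenA c (LambdaA h r) (LambdaA h r) x (Inr a) (Inr b) (Inr d) =
     2 * ((\<Sum>i\<in>UNIV. wedge12 (h i) (\<lambda>a' b'. partial i (\<lambda>y. r y a' b') x) a b d)
          + lie_schouten2 c (r x) (r x) a b d / 2)"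
  unfolding schoutenA_self lie_schouten2_self sum_wedge12
  by (simp add: alt3_def sum_UNIV_sum_type sum_negf) (simp add: field_simps)

theorem proposition2p1:
  fixes c :: "'n::finite \<Rightarrow> 'n \<Rightarrow> 'n \<Rightarrow> real"
    and h :: "'l::finite \<Rightarrow> 'n \<Rightarrow> real"
    and r :: "real^'l \<Rightarrow> 'n \<Rightarrow> 'n \<Rightarrow> real"
  assumes "lie_structure c"
    and "lin_indep_family h"
    and "abelian_family c h"
    and "smooth_wedge2_map r"
  shows "triangular_dynamical_r_matrix c h r \<longleftrightarrow>
           schoutenA c (LambdaA h r) (LambdaA h r) = (\<lambda>_ _ _ _. 0)"
proof -
  let ?S = "schoutenA c (LambdaA h r) (LambdaA h r)"
  let ?cdybe = "\<lambda>x a b d. (\<Sum>i\<in>UNIV. wedge12 (h i) (\<lambda>a' b'. partial i (\<lambda>y. r y a' b') x) a b d)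
                   + lie_schouten2 c (r x) (r x) a b d / 2"
  have c_antisym: "\<And>a b k. c a b k = - c b a k"
    using assms(1) unfolding lie_structure_def by blast
  have r_antisym: "\<And>a b. r x a b = - r x b a" for x
    using assms(4) unfolding smooth_wedge2_map_def by blast
  have "?S x = (\<lambda>_ _ _. 0) \<longleftrightarrow>
      (\<forall>a b d. ?S x (Inr a) (Inr b) (Inr d) = 0) \<and> (\<forall>a b i. ?S x (Inr a) (Inr b) (Inl i) = 0)" for x
    by (rule trivector_eq_0_iff_sum_type)
      (rule schoutenA_swap12 schoutenA_swap23 schoutenA_LambdaA_Inl_Inl[OF assms(3)])+
  then have "?S = (\<lambda>_ _ _ _. 0) \<longleftrightarrow>
      (\<forall>x a b d. ?S x (Inr a) (Inr b) (Inr d) = 0) \<and> (\<forall>x a b i. ?S x (Inr a) (Inr b) (Inl i) = 0)"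
    by (auto simp only: fun_eq_iff)
  also have "\<dots> \<longleftrightarrow> (\<forall>x a b d. ?cdybe x a b d = 0) \<and> (\<forall>x a b i. ad_wedge2 c (h i) (r x) a b = 0)"
    using schoutenA_LambdaA_Inr_Inr_Inl[where c = c and r = r, OF c_antisym r_antisym]
    by (simp only: schoutenA_LambdaA_Inr_Inr_Inr mult_eq_0_iff) simp
  also have "\<dots> \<longleftrightarrow> triangular_dynamical_r_matrix c h r"
    using assms(4) ad_wedge2_lincomb_eq_0_iff[where c = c and h = h]
    unfolding triangular_dynamical_r_matrix_def fun_eq_iff by blast
  finally show ?thesis ..
qed

end
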